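(* Let $\mathfrak L$ be a left-resolving $\lambda$-graph system over a finite alphabet $\Sigma$ which satisfies condition (I). Then $\mathfrak L$ is essentially free, i.e. for all $m\neq n$ in $\mathbb Z_+$ the set $X_{m,n}=\{x\in X_{\mathfrak L}\mid \sigma_{\mathfrak L}^m(x)=\sigma_{\mathfrak L}^n(x)\}$ has empty interior in $X_{\mathfrak L}$.
   Context: $\mathbb Z_+=\{0,1,2,\dots\}$, $\mathbb N=\{1,2,\dots\}$. A $\lambda$-graph system $\mathfrak L=(V,E,\lambda,\iota)$ over a finite alphabet $\Sigma$ consists of finite nonempty pairwise disjoint vertex sets $V_l$ ($l\in\mathbb Z_+$), $V=\bigcup_l V_l$; finite pairwise disjoint edge sets $E_{l,l+1}$, $E=\bigcup_l E_{l,l+1}$, each $e\in E_{l,l+1}$ having a source $s(e)\in V_l$ and a terminal $t(e)\in V_{l+1}$; a labeling map $\lambda:E\to\Sigma$; and surjections $\iota=\iota_{l,l+1}:V_{l+1}\to V_l$; such that every vertex is the source of some edge, every vertex in $V_l$ with $l\ge1$ is the terminal of some edge, and (local property) for all $l\ge1$, $u\in V_{l-1}$, $v\in V_{l+1}$ there is a label-preserving bijection between $\{e\in E_{l,l+1}: \iota(s(e))=u,\ t(e)=v\}$ and $\{e\in E_{l-1,l}: s(e)=u,\ t(e)=\iota(v)\}$. It is left-resolving if $e,f\in E$, $t(e)=t(f)$, $\lambda(e)=\lambda(f)$ imply $e=f$. $\Omega_{\mathfrak L}=\{(u^l)_{l\in\mathbb Z_+}\in\prod_l V_l: \iota(u^{l+1})=u^l\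 \forall l\}$ with the projective limit topology. $E_{\mathfrak L}$ is the set of $(u,\alpha,w)\in\Omega_{\mathfrak L}\times\Sigma\times\Omega_{\mathfrak L}$ such that for each $l$ there is $e\in E_{l,l+1}$ with $s(e)=u^l$, $t(e)=w^{l+1}$, $\lambda(e)=\alpha$. $X_{\mathfrak L}$ is the set of sequences $(\alpha_i,u_i)_{i\in\mathbb N}\in\prod_{i\in\mathbb N}(\Sigma\times\Omega_{\mathfrak L})$ with $(u_i,\alpha_{i+1},u_{i+1})\in E_{\mathfrak L}$ for all $i\in\mathbb N$ and $(u_0,\alpha_1,u_1)\in E_{\mathfrak L}$ for some $u_0\in\Omega_{\mathfrak L}$, with the relative product topology; $\sigma_{\mathfrak L}((\alpha_i,u_i)_{i\in\mathbb N})=(\alpha_{i+1},u_{i+1})_{i\in\mathbb N}$. Condition (I): for every $l\in\mathbb Z_+$ and $v\in V_l$, the set $\Gamma^+_\infty(v)\subset\Sigma^{\mathbb N}$ of all sequences $(\alpha_1,\alpha_2,\dots)$ for which there are edges $e_{n,n+1}\in E_{n,n+1}$ ($n\ge l$) with $s(e_{l,l+1})=v$, $t(e_{n,n+1})=s(e_{n+1,n+2})$ and $\lambda(e_{n,n+1})=\alpha_{n-l+1}$ for all $n\ge l$, contains at least two distinct sequences. *)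

theory Defs
  imports "HOL-Analysis.Analysis"
begin

text \<open>V l is the vertex set V_l,
 E l is the edge set E_{l,l+1}; src, trg, lab, iota are the source, terminal,
 labeling and iota maps (only their values on V resp. E matter).\<close>

definition lambda_graph_system ::
  "'s set \<Rightarrow> (nat \<Rightarrow> 'v set) \<Rightarrow> (nat \<Rightarrow> 'e set) \<Rightarrow> ('e \<Rightarrow> 'v) \<Rightarrow> ('e \<Rightarrow> 'v)
    \<Rightarrow> ('e \<Rightarrow> 's) \<Rightarrow> ('v \<Rightarrow> 'v) \<Rightarrow> bool" where
  "lambda_graph_system Alph V E src trg lab iota \<longleftrightarrow>
     finite Alph \<and>
     (\<forall>l. finite (V l) \<and> V l \<noteq> {}) \<and>
     (\<forall>l k. l \<noteq> k \<longrightarrow> V l \<inter> V k = {}) \<and>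
     (\<forall>l. finite (E l)) \<and>
     (\<forall>l k. l \<noteq> k \<longrightarrow> E l \<inter> E k = {}) \<and>
     (\<forall>l. \<forall>e\<in>E l. src e \<in> V l \<and> trg e \<in> V (Suc l) \<and> lab e \<in> Alph) \<and>
     (\<forall>l. iota ` V (Suc l) = V l) \<and>
     (\<forall>l. \<forall>v\<in>V l. \<exists>e\<in>E l. src e = v) \<and>
     (\<forall>l. \<forall>v\<in>V (Suc l). \<exists>e\<in>E l. trg e = v) \<and>
     (\<forall>l\<ge>1. \<forall>u\<in>V (l - 1). \<forall>v\<in>V (Suc l).
        \<exists>f. bij_betw f {e\<in>E l. iota (src e) = u \<and> trg e = v}
                        {e\<in>E (l - 1). src e = u \<and> trg e = iota v}
            \<and> (\<forall>e\<in>{e\<in>E l. iota (src e) = u \<and> trg e = v}. lab (f e) = lab e))"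

definition left_resolving :: "(nat \<Rightarrow> 'e set) \<Rightarrow> ('e \<Rightarrow> 'v) \<Rightarrow> ('e \<Rightarrow> 's) \<Rightarrow> bool" where
  "left_resolving E trg lab \<longleftrightarrow>
     (\<forall>e\<in>(\<Union>l. E l). \<forall>f\<in>(\<Union>l. E l). trg e = trg f \<and> lab e = lab f \<longrightarrow> e = f)"

text \<open>Gamma^+_infty(v) for v in V_l; sequences are indexed from 0
 (alpha 0 is alpha_1 of the paper).\<close>
definition Gamma_plus_infty ::
  "(nat \<Rightarrow> 'e set) \<Rightarrow> ('e \<Rightarrow> 'v) \<Rightarrow> ('e \<Rightarrow> 'v) \<Rightarrow> ('e \<Rightarrow> 's) \<Rightarrow> nat \<Rightarrow> 'v \<Rightarrow> (nat \<Rightarrow> 's) set" where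
  "Gamma_plus_infty E src trg lab l v =
     {\<alpha>. \<exists>p::nat \<Rightarrow> 'e. (\<forall>n. p n \<in> E (l + n)) \<and> src (p 0) = v \<and>
            (\<forall>n. trg (p n) = src (p (Suc n))) \<and> (\<forall>n. lab (p n) = \<alpha> n)}"

definition condition_I ::
  "(nat \<Rightarrow> 'v set) \<Rightarrow> (nat \<Rightarrow> 'e set) \<Rightarrow> ('e \<Rightarrow> 'v) \<Rightarrow> ('e \<Rightarrow> 'v) \<Rightarrow> ('e \<Rightarrow> 's) \<Rightarrow> bool" where
  "condition_I V E src trg lab \<longleftrightarrow>
     (\<forall>l. \<forall>v\<in>V l. \<exists>a\<in>Gamma_plus_infty E src trg lab l v.
                    \<exists>b\<in>Gamma_plus_infty E src trg lab l v. a \<noteq> b)"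

definition Omega_L :: "(nat \<Rightarrow> 'v set) \<Rightarrow> ('v \<Rightarrow> 'v) \<Rightarrow> (nat \<Rightarrow> 'v) set" where
  "Omega_L V iota = {u. (\<forall>l. u l \<in> V l) \<and> (\<forall>l. iota (u (Suc l)) = u l)}"

text \<open>Projective limit topology = subspace of the product of the discrete V_l.\<close>
definition Omega_top :: "(nat \<Rightarrow> 'v set) \<Rightarrow> ('v \<Rightarrow> 'v) \<Rightarrow> (nat \<Rightarrow> 'v) topology" where
  "Omega_top V iota =
     subtopology (product_topology (\<lambda>l. discrete_topology (V l)) UNIV) (Omega_L V iota)"

definition E_L ::
  "'s set \<Rightarrow> (nat \<Rightarrow> 'v set) \<Rightarrow> (nat \<Rightarrow> 'e set) \<Rightarrow> ('e \<Rightarrow> 'v) \<Rightarrow> ('e \<Rightarrow> 'v)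
    \<Rightarrow> ('e \<Rightarrow> 's) \<Rightarrow> ('v \<Rightarrow> 'v) \<Rightarrow> ((nat \<Rightarrow> 'v) \<times> 's \<times> (nat \<Rightarrow> 'v)) set" where
  "E_L Alph V E src trg lab iota =
     {(u, \<alpha>, w). u \<in> Omega_L V iota \<and> \<alpha> \<in> Alph \<and> w \<in> Omega_L V iota \<and>
        (\<forall>l. \<exists>e\<in>E l. src e = u l \<and> trg e = w (Suc l) \<and> lab e = \<alpha>)}"

text \<open>X_L: the paper's sequence (alpha_i, u_i)_{i>=1} is represented by
 x :: nat => _ with x k = (alpha_{k+1}, u_{k+1}).\<close>
definition X_L ::
  "'s set \<Rightarrow> (nat \<Rightarrow> 'v set) \<Rightarrow> (nat \<Rightarrow> 'e set) \<Rightarrow> ('e \<Rightarrow> 'v) \<Rightarrow> ('e \<Rightarrow> 'v)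
    \<Rightarrow> ('e \<Rightarrow> 's) \<Rightarrow> ('v \<Rightarrow> 'v) \<Rightarrow> (nat \<Rightarrow> 's \<times> (nat \<Rightarrow> 'v)) set" where
  "X_L Alph V E src trg lab iota =
     {x. (\<forall>k. fst (x k) \<in> Alph \<and> snd (x k) \<in> Omega_L V iota) \<and>
         (\<forall>k. (snd (x k), fst (x (Suc k)), snd (x (Suc k))) \<in> E_L Alph V E src trg lab iota) \<and>
         (\<exists>u0\<in>Omega_L V iota. (u0, fst (x 0), snd (x 0)) \<in> E_L Alph V E src trg lab iota)}"

definition X_top ::
  "'s set \<Rightarrow> (nat \<Rightarrow> 'v set) \<Rightarrow> (nat \<Rightarrow> 'e set) \<Rightarrow> ('e \<Rightarrow> 'v) \<Rightarrow> ('e \<Rightarrow> 'v)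
    \<Rightarrow> ('e \<Rightarrow> 's) \<Rightarrow> ('v \<Rightarrow> 'v) \<Rightarrow> (nat \<Rightarrow> 's \<times> (nat \<Rightarrow> 'v)) topology" where
  "X_top Alph V E src trg lab iota =
     subtopology
       (product_topology (\<lambda>k. prod_topology (discrete_topology Alph) (Omega_top V iota)) UNIV)
       (X_L Alph V E src trg lab iota)"

definition sigma_L :: "(nat \<Rightarrow> 'a) \<Rightarrow> (nat \<Rightarrow> 'a)" where
  "sigma_L x = (\<lambda>k. x (Suc k))"

definition X_mn ::
  "'s set \<Rightarrow> (nat \<Rightarrow> 'v set) \<Rightarrow> (nat \<Rightarrow> 'e set) \<Rightarrow> ('e \<Rightarrow> 'v) \<Rightarrow> ('e \<Rightarrow> 'v)
    \<Rightarrow> ('e \<Rightarrow> 's) \<Rightarrow> ('v \<Rightarrow> 'v) \<Rightarrow> nat \<Rightarrow> nat \<Rightarrow> (nat \<Rightarrow> 's \<times> (nat \<Rightarrow> 'v)) set" where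
  "X_mn Alph V E src trg lab iota m n =
     {x \<in> X_L Alph V E src trg lab iota. (sigma_L ^^ m) x = (sigma_L ^^ n) x}"

definition essentially_free ::
  "'s set \<Rightarrow> (nat \<Rightarrow> 'v set) \<Rightarrow> (nat \<Rightarrow> 'e set) \<Rightarrow> ('e \<Rightarrow> 'v) \<Rightarrow> ('e \<Rightarrow> 'v)
    \<Rightarrow> ('e \<Rightarrow> 's) \<Rightarrow> ('v \<Rightarrow> 'v) \<Rightarrow> bool" where
  "essentially_free Alph V E src trg lab iota \<longleftrightarrow>
     (\<forall>m n. m \<noteq> n \<longrightarrow>
        (X_top Alph V E src trg lab iota) interior_of (X_mn Alph V E src trg lab iota m n) = {})"

end

theory Submission
  imports Defs
begin

text \<open>Suppose \<open>X\<^sub>m\<^sub>,\<^sub>n\<close> (\<open>m < n\<close>) contained a nonempty open set \<open>U\<close>. Points of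
  \<open>X\<^sub>m\<^sub>,\<^sub>n\<close> have eventually periodic label sequences, determined by their first \<open>n\<close>
  labels. For \<open>x \<in> U\<close> and every \<open>N\<close>, condition (I) provides an infinite labelled path leaving
  the vertex that \<open>x\<close> reaches after \<open>N + 1\<close> steps whose labels differ from those of \<open>x\<close>.
  Following \<open>x\<close> and then this path gives an edge path of \<open>\<frak>L\<close>, which lifts to a point of
  \<open>X\<^sub>\<frak>L\<close>: Koenig's lemma for the inverse system of finite vertex sets chooses the vertices,
  and left-resolvingness makes predecessors unique. These points converge to \<open>x\<close>, so one of them
  lies in \<open>U\<close>; it then shares the first \<open>n\<close> labels of \<open>x\<close>, hence all of them, a
  contradiction.\<close>

lemma decseq_finite_Inter_nonempty:
  fixes A :: "nat \<Rightarrow> 'a set"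
  assumes dec: "decseq A" and fin: "finite (A 0)" and ne: "\<And>n. A n \<noteq> {}"
  shows "(\<Inter>n. A n) \<noteq> {}"
proof
  assume "(\<Inter>n. A n) = {}"
  then have "\<forall>b\<in>A 0. \<exists>n. b \<notin> A n" by blast
  then obtain g where g: "\<And>b. b \<in> A 0 \<Longrightarrow> b \<notin> A (g b)" by metis
  define K where "K = Max (g ` A 0)"
  obtain b where b: "b \<in> A K" using ne by blast
  then have b0: "b \<in> A 0" using dec by (auto simp: decseq_def)
  then have "g b \<le> K" using fin by (simp add: K_def)
  then have "b \<in> A (g b)" using b dec by (auto simp: decseq_def)
  with g[OF b0] show False by contradiction
qed

primrec iter_image :: "(nat \<Rightarrow> 'a set) \<Rightarrow> (nat \<Rightarrow> 'a \<Rightarrow> 'a) \<Rightarrow> nat \<Rightarrow> nat \<Rightarrow> 'a set" where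
  "iter_image S f n 0 = S n"
| "iter_image S f n (Suc k) = f n ` iter_image S f (Suc n) k"

lemma inverse_limit_nonempty:
  fixes S :: "nat \<Rightarrow> 'a set" and f :: "nat \<Rightarrow> 'a \<Rightarrow> 'a"
  assumes fin: "\<And>n. finite (S n)" and ne: "\<And>n. S n \<noteq> {}"
    and maps: "\<And>n z. z \<in> S (Suc n) \<Longrightarrow> f n z \<in> S n"
  shows "\<exists>t. \<forall>n. t n \<in> S n \<and> f n (t (Suc n)) = t n"
proof -
  have img_ne: "iter_image S f n k \<noteq> {}" for n k
    by (induction k arbitrary: n) (simp_all add: ne)
  have dec: "decseq (iter_image S f n)" for n
  proof -
    have "iter_image S f n (Suc k) \<subseteq> iter_image S f n k" for k
      by (induction k arbitrary: n) (auto intro: maps)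
    then show ?thesis by (rule decseq_SucI)
  qed
  define T where "T n = (\<Inter>k. iter_image S f n k)" for n
  have "\<exists>b. b \<in> T (Suc n) \<and> f n b = a" if a: "a \<in> T n" for n a
  proof -
    define C where "C k = {b \<in> iter_image S f (Suc n) k. f n b = a}" for k
    have "decseq C" using dec[of "Suc n"] by (auto simp: decseq_def C_def)
    moreover have "finite (C 0)" using fin[of "Suc n"] by (simp add: C_def)
    moreover have "C k \<noteq> {}" for k
      using a unfolding T_def C_def by (force dest: spec[of _ "Suc k"])
    ultimately have "(\<Inter>k. C k) \<noteq> {}" by (rule decseq_finite_Inter_nonempty)
    then show ?thesis by (auto simp: C_def T_def)
  qed
  moreover have "T 0 \<noteq> {}"
    unfolding T_def by (rule decseq_finite_Inter_nonempty[OF dec]) (simp_all add: fin img_ne)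
  ultimately obtain t where "\<forall>n. t n \<in> T n \<and> f n (t (Suc n)) = t n"
    using dependent_nat_choice[of "\<lambda>n a. a \<in> T n" "\<lambda>n a b. f n b = a"] by fast
  moreover have "T n \<subseteq> S n" for n unfolding T_def by (metis INT_lower UNIV_I iter_image.simps(1))
  ultimately show ?thesis by blast
qed

lemma funpow_sigma_L: "(sigma_L ^^ k) x = (\<lambda>i. x (i + k))"
  by (induction k) (auto simp: sigma_L_def)

lemma X_mn_shift: "x \<in> X_mn Alph V E src trg lab iota m n \<Longrightarrow> x (i + m) = x (i + n)"
  unfolding X_mn_def funpow_sigma_L by (auto dest: fun_cong[of _ _ i])

lemma X_mn_commute: "X_mn Alph V E src trg lab iota m n = X_mn Alph V E src trg lab iota n m"
  unfolding X_mn_def by auto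

lemma eventually_periodic_eqI:
  fixes z z' :: "nat \<Rightarrow> 'a"
  assumes "m < n" and z: "\<And>i. z (i + m) = z (i + n)" and z': "\<And>i. z' (i + m) = z' (i + n)"
    and init: "\<And>i. i < n \<Longrightarrow> z i = z' i"
  shows "z = z'"
proof
  fix i show "z i = z' i"
  proof (induction i rule: less_induct)
    case (less i)
    show ?case
    proof (cases "i < n")
      case True
      then show ?thesis by (rule init)
    next
      case False
      define j where "j = i - n"
      then have i: "i = j + n" using False by simp
      then have "z' (j + m) = z (j + m)" using \<open>m < n\<close> less.IH[of "j + m"] by simp
      then show ?thesis unfolding i z[symmetric] z'[symmetric] by (rule sym)
    qed
  qed
qed

lemma Omega_L_agree_below:
  assumes u: "u \<in> Omega_L V iota" and u': "u' \<in> Omega_L V iota"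
  shows "u L = u' L \<Longrightarrow> l \<le> L \<Longrightarrow> u l = u' l"
proof (induction L)
  case (Suc L)
  show ?case
  proof (cases "l = Suc L")
    case False
    have "u L = iota (u (Suc L))" using u by (simp add: Omega_L_def)
    also have "\<dots> = u' L" using u' Suc.prems(1) by (simp add: Omega_L_def)
    finally show ?thesis using Suc.IH False Suc.prems(2) by simp
  qed (use Suc.prems in simp)
qed simp

lemma funpow_compatible:
  assumes "\<And>l. g (u (Suc l)) = u l"
  shows "(g ^^ k) (u (l + k)) = u l"
  by (induction k) (simp_all add: funpow_swap1 assms)

lemma topspace_Omega_top: "topspace (Omega_top V iota) = Omega_L V iota"
  unfolding Omega_top_def by (auto simp: Omega_L_def PiE_iff)

lemma E_L_Omega_L:
  "(u, \<alpha>, w) \<in> E_L Alph V E src trg lab iota \<Longrightarrow> u \<in> Omega_L V iota \<and> \<alpha> \<in> Alph \<and> w \<in> Omega_L V iota"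
  unfolding E_L_def by simp

lemma X_L_iff_E_L_path:
  "x \<in> X_L Alph V E src trg lab iota \<longleftrightarrow>
     (\<exists>w. \<forall>k. (w k, fst (x k), w (Suc k)) \<in> E_L Alph V E src trg lab iota \<and> snd (x k) = w (Suc k))"
proof
  assume "x \<in> X_L Alph V E src trg lab iota"
  then obtain u0 where start: "(u0, fst (x 0), snd (x 0)) \<in> E_L Alph V E src trg lab iota"
    and chain: "\<And>k. (snd (x k), fst (x (Suc k)), snd (x (Suc k))) \<in> E_L Alph V E src trg lab iota"
    unfolding X_L_def by blast
  define w where "w = case_nat u0 (snd \<circ> x)"
  have w_Suc: "w (Suc k) = snd (x k)" for k by (simp add: w_def)
  have edges: "(w k, fst (x k), snd (x k)) \<in> E_L Alph V E src trg lab iota" for k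
    using start chain by (cases k) (simp_all add: w_def)
  show "\<exists>w. \<forall>k. (w k, fst (x k), w (Suc k)) \<in> E_L Alph V E src trg lab iota \<and> snd (x k) = w (Suc k)"
  proof (intro exI allI conjI)
    fix k
    show "(w k, fst (x k), w (Suc k)) \<in> E_L Alph V E src trg lab iota" unfolding w_Suc by (rule edges)
    show "snd (x k) = w (Suc k)" by (rule w_Suc[symmetric])
  qed
next
  assume "\<exists>w. \<forall>k. (w k, fst (x k), w (Suc k)) \<in> E_L Alph V E src trg lab iota \<and> snd (x k) = w (Suc k)"
  then obtain w where w: "\<And>k. (w k, fst (x k), w (Suc k)) \<in> E_L Alph V E src trg lab iota"
    and snd_x: "\<And>k. snd (x k) = w (Suc k)" by blast
  have "fst (x k) \<in> Alph \<and> snd (x k) \<in> Omega_L V iota" for k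
    using E_L_Omega_L[OF w[of k]] snd_x[of k] by simp
  then have coords: "\<forall>k. fst (x k) \<in> Alph \<and> snd (x k) \<in> Omega_L V iota" ..
  have "(snd (x k), fst (x (Suc k)), snd (x (Suc k))) \<in> E_L Alph V E src trg lab iota" for k
    using w[of "Suc k"] by (simp only: snd_x)
  then have chain: "\<forall>k. (snd (x k), fst (x (Suc k)), snd (x (Suc k))) \<in> E_L Alph V E src trg lab iota" ..
  have start: "(w 0, fst (x 0), snd (x 0)) \<in> E_L Alph V E src trg lab iota"
    using w[of 0] by (simp only: snd_x)
  have "w 0 \<in> Omega_L V iota" using E_L_Omega_L[OF w[of 0]] by simp
  with coords chain start show "x \<in> X_L Alph V E src trg lab iota"
    unfolding X_L_def by (intro CollectI conjI bexI)
qed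

lemma X_L_coords:
  "x \<in> X_L Alph V E src trg lab iota \<Longrightarrow> fst (x k) \<in> Alph \<and> snd (x k) \<in> Omega_L V iota"
  unfolding X_L_def by blast

lemma limitin_Omega_top:
  assumes "u \<in> Omega_L V iota" "\<And>N. U N \<in> Omega_L V iota"
    and "\<And>l. \<forall>\<^sub>F N in sequentially. U N l = u l"
  shows "limitin (Omega_top V iota) U u sequentially"
  unfolding Omega_top_def limitin_subtopology limitin_componentwise
proof (intro conjI ballI)
  show "\<forall>\<^sub>F N in sequentially. U N \<in> topspace (product_topology (\<lambda>l. discrete_topology (V l)) UNIV)"
    using assms(2) by (simp add: Omega_L_def PiE_iff)
  show "limitin (discrete_topology (V l)) (\<lambda>N. U N l) (u l) sequentially" for l
    using assms(1,3) by (intro limitin_eventually) (simp_all add: Omega_L_def)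
qed (use assms in auto)

lemma limitin_X_top:
  assumes x: "x \<in> X_L Alph V E src trg lab iota" and Y: "\<And>N. Y N \<in> X_L Alph V E src trg lab iota"
    and lab_eq: "\<And>k. \<forall>\<^sub>F N in sequentially. fst (Y N k) = fst (x k)"
    and vertex_eq: "\<And>k l. \<forall>\<^sub>F N in sequentially. snd (Y N k) l = snd (x k) l"
  shows "limitin (X_top Alph V E src trg lab iota) Y x sequentially"
  unfolding X_top_def limitin_subtopology limitin_componentwise
proof (intro conjI ballI)
  have "Y N k \<in> Alph \<times> Omega_L V iota" for N k
    using X_L_coords[OF Y] by (simp add: mem_Times_iff)
  then show "\<forall>\<^sub>F N in sequentially. Y N \<in> topspace
      (product_topology (\<lambda>k. prod_topology (discrete_topology Alph) (Omega_top V iota)) UNIV)"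
    by (simp add: topspace_Omega_top PiE_iff)
  fix k
  have "limitin (discrete_topology Alph) (fst \<circ> (\<lambda>N. Y N k)) (fst (x k)) sequentially"
    using X_L_coords[OF x] lab_eq by (intro limitin_eventually) simp_all
  moreover have "limitin (Omega_top V iota) (snd \<circ> (\<lambda>N. Y N k)) (snd (x k)) sequentially"
    using X_L_coords[OF x] X_L_coords[OF Y] vertex_eq
    by (intro limitin_Omega_top) simp_all
  ultimately show "limitin (prod_topology (discrete_topology Alph) (Omega_top V iota)) (\<lambda>N. Y N k) (x k) sequentially"
    by (simp add: limitin_pairwise)
qed (use x Y in auto)

locale left_resolving_lambda_graph_system =
  fixes Alph :: "'s set" and V :: "nat \<Rightarrow> 'v set" and E :: "nat \<Rightarrow> 'e set"
    and src trg :: "'e \<Rightarrow> 'v" and lab :: "'e \<Rightarrow> 's" and iota :: "'v \<Rightarrow> 'v"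
  assumes lgs: "lambda_graph_system Alph V E src trg lab iota"
    and left_res: "left_resolving E trg lab"
begin

lemma finite_V: "finite (V l)"
  using lgs by (simp add: lambda_graph_system_def)

lemma src_in_V: "e \<in> E l \<Longrightarrow> src e \<in> V l"
  and trg_in_V: "e \<in> E l \<Longrightarrow> trg e \<in> V (Suc l)"
  and lab_in_Alph: "e \<in> E l \<Longrightarrow> lab e \<in> Alph"
  using lgs by (simp_all add: lambda_graph_system_def)

lemma iota_image: "iota ` V (Suc l) = V l"
  using lgs by (simp add: lambda_graph_system_def)

lemma iota_in_V: "v \<in> V (Suc l) \<Longrightarrow> iota v \<in> V l"
  using iota_image by blast

lemma iota_surj:
  assumes "v \<in> V l" obtains w where "w \<in> V (Suc l)" "iota w = v"
proof -
  have "v \<in> iota ` V (Suc l)" using assms by (simp add: iota_image)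
  with that show ?thesis by blast
qed

lemma funpow_iota_in_V: "v \<in> V (l + k) \<Longrightarrow> (iota ^^ k) v \<in> V l"
proof (induction k arbitrary: v)
  case (Suc k)
  have "(iota ^^ k) (iota v) \<in> V l" using Suc iota_in_V by simp
  then show ?case by (simp add: funpow_Suc_right del: funpow.simps)
qed simp

lemma funpow_iota_surj: "v \<in> V l \<Longrightarrow> \<exists>w\<in>V (l + k). (iota ^^ k) w = v"
proof (induction k)
  case (Suc k)
  then obtain w where w: "w \<in> V (l + k)" "(iota ^^ k) w = v" by blast
  obtain w' where "w' \<in> V (Suc (l + k))" "iota w' = w" using iota_surj[OF w(1)] .
  with w show ?case by (auto simp: funpow_Suc_right simp del: funpow.simps)
qed simp

lemma local_property:
  assumes "u \<in> V l" "v \<in> V (Suc (Suc l))"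
  shows "\<exists>f. bij_betw f {e \<in> E (Suc l). iota (src e) = u \<and> trg e = v}
                         {e \<in> E l. src e = u \<and> trg e = iota v}
            \<and> (\<forall>e \<in> {e \<in> E (Suc l). iota (src e) = u \<and> trg e = v}. lab (f e) = lab e)"
proof -
  have "\<forall>l\<ge>1. \<forall>u\<in>V (l - 1). \<forall>v\<in>V (Suc l).
        \<exists>f. bij_betw f {e\<in>E l. iota (src e) = u \<and> trg e = v}
                        {e\<in>E (l - 1). src e = u \<and> trg e = iota v}
            \<and> (\<forall>e\<in>{e\<in>E l. iota (src e) = u \<and> trg e = v}. lab (f e) = lab e)"
    using lgs unfolding lambda_graph_system_def by (elim conjE)
  from this[rule_format, of "Suc l" u v] assms show ?thesis by simp
qed

lemma edge_down:
  assumes e: "e \<in> E (Suc l)"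
  shows "\<exists>e'\<in>E l. src e' = iota (src e) \<and> trg e' = iota (trg e) \<and> lab e' = lab e"
proof -
  have "iota (src e) \<in> V l" using src_in_V[OF e] by (rule iota_in_V)
  from local_property[OF this trg_in_V[OF e]] obtain f
    where f: "bij_betw f {e' \<in> E (Suc l). iota (src e') = iota (src e) \<and> trg e' = trg e}
                         {e' \<in> E l. src e' = iota (src e) \<and> trg e' = iota (trg e)}"
      and lab_f: "\<forall>e' \<in> {e' \<in> E (Suc l). iota (src e') = iota (src e) \<and> trg e' = trg e}. lab (f e') = lab e'"
    by blast
  have "f e \<in> {e' \<in> E l. src e' = iota (src e) \<and> trg e' = iota (trg e)}"
    using bij_betw_apply[OF f] e by simp
  with lab_f e show ?thesis by auto
qed

lemma edge_up:
  assumes e: "e \<in> E l" and v: "v \<in> V (Suc (Suc l))" "iota v = trg e"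
  shows "\<exists>e'\<in>E (Suc l). trg e' = v \<and> iota (src e') = src e \<and> lab e' = lab e"
proof -
  from local_property[OF src_in_V[OF e] v(1)] obtain f
    where f: "bij_betw f {e' \<in> E (Suc l). iota (src e') = src e \<and> trg e' = v}
                         {e' \<in> E l. src e' = src e \<and> trg e' = iota v}"
      and lab_f: "\<forall>e' \<in> {e' \<in> E (Suc l). iota (src e') = src e \<and> trg e' = v}. lab (f e') = lab e'"
    by blast
  have "e \<in> f ` {e' \<in> E (Suc l). iota (src e') = src e \<and> trg e' = v}"
    using f e v(2) unfolding bij_betw_def by simp
  then obtain e' where "e' \<in> E (Suc l)" "iota (src e') = src e" "trg e' = v" "e = f e'" by blast
  then show ?thesis using lab_f by auto
qed

lemma edge_down_funpow:
  "e \<in> E (l + k) \<Longrightarrow>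
    \<exists>e'\<in>E l. src e' = (iota ^^ k) (src e) \<and> trg e' = (iota ^^ k) (trg e) \<and> lab e' = lab e"
proof (induction k arbitrary: e)
  case (Suc k)
  then have "e \<in> E (Suc (l + k))" by simp
  from edge_down[OF this] obtain e1
    where "e1 \<in> E (l + k)" "src e1 = iota (src e)" "trg e1 = iota (trg e)" "lab e1 = lab e" by blast
  with Suc.IH[of e1] show ?case by (auto simp: funpow_Suc_right simp del: funpow.simps)
qed auto

lemma edge_up_funpow:
  "e \<in> E l \<Longrightarrow> v \<in> V (Suc l + k) \<Longrightarrow> (iota ^^ k) v = trg e \<Longrightarrow>
    \<exists>e'\<in>E (l + k). trg e' = v \<and> (iota ^^ k) (src e') = src e \<and> lab e' = lab e"
proof (induction k arbitrary: v)
  case (Suc k)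
  have "iota v \<in> V (Suc l + k)" using Suc.prems(2) iota_image by auto
  moreover have "(iota ^^ k) (iota v) = trg e"
    using Suc.prems(3) by (simp add: funpow_Suc_right del: funpow.simps)
  ultimately obtain e1 where e1: "e1 \<in> E (l + k)" "trg e1 = iota v" "(iota ^^ k) (src e1) = src e"
    "lab e1 = lab e" using Suc.IH[OF Suc.prems(1)] by blast
  have "v \<in> V (Suc (Suc (l + k)))" using Suc.prems(2) by simp
  from edge_up[OF e1(1) this e1(2)[symmetric]] obtain e' where
    "e' \<in> E (Suc (l + k))" "trg e' = v" "iota (src e') = src e1" "lab e' = lab e1" by blast
  with e1 show ?case by (auto simp: funpow_Suc_right simp del: funpow.simps)
qed auto

lemma left_resolvingD:
  "e \<in> E l \<Longrightarrow> e' \<in> E l' \<Longrightarrow> trg e = trg e' \<Longrightarrow> lab e = lab e' \<Longrightarrow> e = e'"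
  using left_res unfolding left_resolving_def by blast

text \<open>Junk unless some edge with terminal \<open>v\<close> and label \<open>a\<close> exists; by left-resolvingness
  there is then exactly one.\<close>
definition pred_edge :: "'s \<Rightarrow> 'v \<Rightarrow> 'e" where
  "pred_edge a v = (THE e. e \<in> (\<Union>l. E l) \<and> trg e = v \<and> lab e = a)"

lemma pred_edge_eqI:
  assumes e: "e \<in> E l" "trg e = v" "lab e = a"
  shows "pred_edge a v = e"
  unfolding pred_edge_def
proof (rule the_equality)
  show "e \<in> (\<Union>l. E l) \<and> trg e = v \<and> lab e = a" using e by blast
next
  fix e' assume "e' \<in> (\<Union>l. E l) \<and> trg e' = v \<and> lab e' = a"
  then obtain l' where "e' \<in> E l'" "trg e' = trg e" "lab e' = lab e" using e by auto
  with e(1) show "e' = e" by (blast dest: left_resolvingD)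
qed

lemma E_L_path_from_base:
  assumes D_V: "\<And>j. D j \<in> V (M + j + j)"
    and base: "\<And>j. \<exists>e\<in>E (M + j + j). src e = D j \<and> trg e = iota (D (Suc j)) \<and> lab e = a j"
  obtains w where "\<And>j. w j (M + j + j) = D j"
    and "\<And>j. (w j, a j, w (Suc j)) \<in> E_L Alph V E src trg lab iota"
proof -
  txt \<open>\<open>H r j\<close> lies \<open>r\<close> levels above \<open>D j\<close>, reached by taking sources of predecessor
    edges labelled \<open>a j\<close>; \<open>w j\<close> projects this tower down to all levels.\<close>
  define step where "step G j = src (pred_edge (a j) (G (Suc j)))" for G :: "nat \<Rightarrow> 'v" and j
  define H where "H r = (step ^^ r) D" for r
  have H_Suc: "H (Suc r) j = src (pred_edge (a j) (H r (Suc j)))" for r j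
    by (simp add: H_def step_def)
  have tower: "H r j \<in> V (M + j + j + r) \<and>
      (\<exists>e\<in>E (Suc (M + j + j + r)). trg e = H r (Suc j) \<and> lab e = a j \<and> iota (src e) = H r j)" for r j
  proof (induction r arbitrary: j)
    case 0
    obtain e where e: "e \<in> E (M + j + j)" "src e = D j" "trg e = iota (D (Suc j))" "lab e = a j"
      using base by blast
    have "D (Suc j) \<in> V (Suc (Suc (M + j + j)))" using D_V[of "Suc j"] by simp
    from edge_up[OF e(1) this e(3)[symmetric]] e show ?case
      using D_V by (auto simp: H_def)
  next
    case (Suc r)
    from Suc.IH[of j] obtain e1 where e1: "e1 \<in> E (Suc (M + j + j + r))" "trg e1 = H r (Suc j)"
      "lab e1 = a j" by blast
    from Suc.IH[of "Suc j"] obtain e3 where e3: "e3 \<in> E (Suc (M + Suc j + Suc j + r))"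
      "trg e3 = H r (Suc (Suc j))" "lab e3 = a (Suc j)" "iota (src e3) = H r (Suc j)" by blast
    have H1: "H (Suc r) j = src e1" using H_Suc pred_edge_eqI[OF e1] by simp
    have H3: "H (Suc r) (Suc j) = src e3" using H_Suc pred_edge_eqI[OF e3(1-3)] by simp
    have "H (Suc r) (Suc j) \<in> V (Suc (Suc (Suc (M + j + j + r))))"
      using src_in_V[OF e3(1)] H3 by simp
    moreover have "iota (H (Suc r) (Suc j)) = trg e1" using H3 e3(4) e1(2) by simp
    ultimately have "\<exists>e\<in>E (Suc (Suc (M + j + j + r))). trg e = H (Suc r) (Suc j) \<and>
        iota (src e) = src e1 \<and> lab e = lab e1"
      using edge_up[OF e1(1)] by simp
    then show ?case using src_in_V[OF e1(1)] H1 e1(3) by auto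
  qed
  have H_iota: "iota (H (Suc r) j) = H r j" for r j
    using tower[of r j] H_Suc pred_edge_eqI by metis
  define w where "w j l = (iota ^^ (M + j + j)) (H l j)" for j l
  have w_Omega: "w j \<in> Omega_L V iota" for j
  proof -
    have "w j l \<in> V l" for l
      unfolding w_def using tower[of l j] by (intro funpow_iota_in_V) (simp add: add.commute)
    moreover have "iota (w j (Suc l)) = w j l" for l
      unfolding w_def by (simp only: funpow_swap1 H_iota)
    ultimately show ?thesis unfolding Omega_L_def by blast
  qed
  have "w j (M + j + j) = D j" for j
    unfolding w_def using funpow_compatible[of iota "\<lambda>r. H r j" "M + j + j" 0] H_iota
    by (simp add: H_def)
  moreover have "(w j, a j, w (Suc j)) \<in> E_L Alph V E src trg lab iota" for j
  proof -
    have "\<exists>e'\<in>E l. src e' = w j l \<and> trg e' = w (Suc j) (Suc l) \<and> lab e' = a j" for l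
    proof -
      from tower[of l j] obtain e where e: "e \<in> E (l + Suc (M + j + j))" "trg e = H l (Suc j)"
        "lab e = a j" "iota (src e) = H l j" by (auto simp: add.commute)
      have "src e = H (Suc l) j" using H_Suc pred_edge_eqI[OF e(1-3)] by simp
      with edge_down_funpow[OF e(1)] e show ?thesis
        unfolding w_def by (auto simp: funpow_Suc_right H_iota simp del: funpow.simps)
    qed
    moreover have "a j \<in> Alph"
      using base[of j] by (auto dest: lab_in_Alph)
    ultimately show ?thesis using w_Omega unfolding E_L_def by simp
  qed
  ultimately show ?thesis using that by blast
qed

lemma lift_edge_path:
  assumes ed: "\<And>j. ed j \<in> E (M + j)" and chain: "\<And>j. trg (ed j) = src (ed (Suc j))"
  obtains w where "\<And>j. w j (M + j) = src (ed j)"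
    and "\<And>j. (w j, lab (ed j), w (Suc j)) \<in> E_L Alph V E src trg lab iota"
proof -
  txt \<open>The \<open>j\<close> spare levels above \<open>src (ed j)\<close> are what make the predecessor maps \<open>f j\<close>
    send \<open>S (Suc j)\<close> into \<open>S j\<close>.\<close>
  define S where "S j = {z \<in> V (M + j + j). (iota ^^ j) z = src (ed j)}" for j
  define f where "f j z = src (pred_edge (lab (ed j)) (iota z))" for j z
  have pred: "\<exists>e\<in>E (M + j + j). src e = f j z \<and> trg e = iota z \<and>
      (iota ^^ j) (src e) = src (ed j) \<and> lab e = lab (ed j)" if z: "z \<in> S (Suc j)" for j z
  proof -
    have "z \<in> V (Suc (Suc (M + j + j)))" using z by (simp add: S_def)
    then have "iota z \<in> V (Suc (M + j) + j)" using iota_in_V by simp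
    moreover have "(iota ^^ j) (iota z) = trg (ed j)"
      using z chain[of j] by (simp add: S_def funpow_Suc_right del: funpow.simps)
    ultimately obtain e where e: "e \<in> E (M + j + j)" "trg e = iota z"
      "(iota ^^ j) (src e) = src (ed j)" "lab e = lab (ed j)"
      using edge_up_funpow[OF ed[of j]] by blast
    moreover have "f j z = src e" using pred_edge_eqI[OF e(1,2,4)] by (simp add: f_def)
    ultimately show ?thesis by auto
  qed
  have "finite (S j)" for j using finite_V by (simp add: S_def)
  moreover have "S j \<noteq> {}" for j
    using funpow_iota_surj[OF src_in_V[OF ed[of j]], of j] by (auto simp: S_def)
  moreover have "f j z \<in> S j" if "z \<in> S (Suc j)" for j z
    using pred[OF that] by (auto simp: S_def dest: src_in_V)
  ultimately obtain D where D: "\<And>j. D j \<in> S j" "\<And>j. f j (D (Suc j)) = D j"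
    using inverse_limit_nonempty[of S f] by blast
  have "\<exists>e\<in>E (M + j + j). src e = D j \<and> trg e = iota (D (Suc j)) \<and> lab e = lab (ed j)" for j
    using pred[OF D(1)[of "Suc j"]] D(2)[of j] by auto
  moreover have "D j \<in> V (M + j + j)" for j using D(1) by (simp add: S_def)
  ultimately obtain w where w: "\<And>j. w j (M + j + j) = D j"
    and w_E_L: "\<And>j. (w j, lab (ed j), w (Suc j)) \<in> E_L Alph V E src trg lab iota"
    using E_L_path_from_base[of D M "\<lambda>j. lab (ed j)"] by blast
  have "w j (M + j) = src (ed j)" for j
  proof -
    have "w j \<in> Omega_L V iota" using E_L_Omega_L[OF w_E_L[of j]] by simp
    then have "w j (M + j) = (iota ^^ j) (w j (M + j + j))"
      using funpow_compatible[of iota "w j" j "M + j"] by (simp add: Omega_L_def)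
    with w[of j] D(1)[of j] show ?thesis by (simp add: S_def)
  qed
  with w_E_L that show ?thesis by blast
qed

lemma X_L_perturb_labels:
  assumes CI: "condition_I V E src trg lab" and x: "x \<in> X_L Alph V E src trg lab iota"
  shows "\<exists>y. y \<in> X_L Alph V E src trg lab iota \<and> (\<forall>k\<le>N. fst (y k) = fst (x k)) \<and>
      (\<forall>k\<le>N. \<forall>l\<le>Suc N. snd (y k) l = snd (x k) l) \<and> fst \<circ> y \<noteq> fst \<circ> x"
proof -
  from x obtain u where u: "\<And>k. (u k, fst (x k), u (Suc k)) \<in> E_L Alph V E src trg lab iota"
    and snd_x: "\<And>k. snd (x k) = u (Suc k)"
    unfolding X_L_iff_E_L_path by blast
  have u_Omega: "u k \<in> Omega_L V iota" for k using E_L_Omega_L[OF u[of k]] by simp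
  define K where "K = Suc N"
  have "u K (K + K) \<in> V (K + K)" using u_Omega by (simp add: Omega_L_def)
  with CI obtain a b where "a \<in> Gamma_plus_infty E src trg lab (K + K) (u K (K + K))"
    "b \<in> Gamma_plus_infty E src trg lab (K + K) (u K (K + K))" "a \<noteq> b"
    unfolding condition_I_def by blast
  then obtain d where "d \<in> Gamma_plus_infty E src trg lab (K + K) (u K (K + K))"
    and d: "d \<noteq> (\<lambda>j. fst (x (K + j)))" by blast
  then obtain p where p: "\<And>i. p i \<in> E (K + K + i)" "src (p 0) = u K (K + K)"
    "\<And>i. trg (p i) = src (p (Suc i))" "\<And>i. lab (p i) = d i"
    unfolding Gamma_plus_infty_def by blast
  txt \<open>Follow the edges of \<open>x\<close> at levels \<open>K + j\<close>, high enough for the lift to agree with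
    \<open>x\<close> up to level \<open>K\<close>, and switch to \<open>p\<close> after \<open>K\<close> steps.\<close>
  define ed where "ed j = (if j < K then SOME e. e \<in> E (K + j) \<and> src e = u j (K + j) \<and>
      trg e = u (Suc j) (Suc (K + j)) \<and> lab e = fst (x j) else p (j - K))" for j
  have ed_lt: "ed j \<in> E (K + j) \<and> src (ed j) = u j (K + j) \<and>
      trg (ed j) = u (Suc j) (Suc (K + j)) \<and> lab (ed j) = fst (x j)" if "j < K" for j
  proof -
    have "\<exists>e. e \<in> E (K + j) \<and> src e = u j (K + j) \<and> trg e = u (Suc j) (Suc (K + j)) \<and> lab e = fst (x j)"
      using u[of j] unfolding E_L_def by blast
    from someI_ex[OF this] show ?thesis using that by (simp add: ed_def)
  qed
  have ed_ge: "ed j = p (j - K)" if "\<not> j < K" for j using that by (simp add: ed_def)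
  have ed_E: "ed j \<in> E (K + j)" for j
    using ed_lt ed_ge p(1)[of "j - K"] by (cases "j < K") simp_all
  have ed_src: "src (ed j) = u j (K + j)" if "j \<le> K" for j
    using that ed_lt ed_ge[of K] p(2) by (cases "j < K") simp_all
  have ed_chain: "trg (ed j) = src (ed (Suc j))" for j
  proof (cases "j < K")
    case True
    then show ?thesis using ed_lt ed_src[of "Suc j"] by simp
  next
    case False
    then show ?thesis using ed_ge[OF False] ed_ge[of "Suc j"] p(3)[of "j - K"] by (simp add: Suc_diff_le)
  qed
  obtain w where w_src: "\<And>j. w j (K + j) = src (ed j)"
    and w_E_L: "\<And>j. (w j, lab (ed j), w (Suc j)) \<in> E_L Alph V E src trg lab iota"
    using lift_edge_path[OF ed_E ed_chain] by blast
  define y where "y k = (lab (ed k), w (Suc k))" for k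
  have y_X_L: "y \<in> X_L Alph V E src trg lab iota"
    unfolding X_L_iff_E_L_path by (intro exI[of _ w]) (simp add: y_def w_E_L)
  have y_fst: "fst (y k) = fst (x k)" if "k \<le> N" for k
    using ed_lt[of k] that by (simp add: y_def K_def)
  have y_snd: "snd (y k) l = snd (x k) l" if "k \<le> N" "l \<le> Suc N" for k l
  proof -
    have "w (Suc k) \<in> Omega_L V iota" using E_L_Omega_L[OF w_E_L[of k]] by simp
    moreover have "w (Suc k) (K + Suc k) = u (Suc k) (K + Suc k)"
      using w_src[of "Suc k"] ed_src[of "Suc k"] that by (simp add: K_def)
    moreover have "l \<le> K + Suc k" using that by (simp add: K_def)
    ultimately have "w (Suc k) l = u (Suc k) l" by (rule Omega_L_agree_below[OF _ u_Omega])
    then show ?thesis by (simp add: y_def snd_x)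
  qed
  have y_labels: "fst \<circ> y \<noteq> fst \<circ> x"
  proof -
    from d obtain j where "d j \<noteq> fst (x (K + j))" by auto
    moreover have "fst (y (K + j)) = d j" using ed_ge[of "K + j"] p(4) by (simp add: y_def)
    ultimately have "(fst \<circ> y) (K + j) \<noteq> (fst \<circ> x) (K + j)" by simp
    then show ?thesis by (rule contrapos_nn) (erule fun_cong)
  qed
  show ?thesis using y_X_L y_fst y_snd y_labels by (intro exI[of _ y]) simp
qed

lemma X_L_approx_other_labels:
  assumes CI: "condition_I V E src trg lab" and x: "x \<in> X_L Alph V E src trg lab iota"
  obtains Y where "limitin (X_top Alph V E src trg lab iota) Y x sequentially"
    and "\<And>N k. k \<le> N \<Longrightarrow> fst (Y N k) = fst (x k)"
    and "\<And>N. fst \<circ> Y N \<noteq> fst \<circ> x"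
proof -
  have "\<forall>N. \<exists>y. y \<in> X_L Alph V E src trg lab iota \<and> (\<forall>k\<le>N. fst (y k) = fst (x k)) \<and>
      (\<forall>k\<le>N. \<forall>l\<le>Suc N. snd (y k) l = snd (x k) l) \<and> fst \<circ> y \<noteq> fst \<circ> x"
    using X_L_perturb_labels[OF CI x] by blast
  then have "\<exists>Y. \<forall>N. Y N \<in> X_L Alph V E src trg lab iota \<and> (\<forall>k\<le>N. fst (Y N k) = fst (x k)) \<and>
      (\<forall>k\<le>N. \<forall>l\<le>Suc N. snd (Y N k) l = snd (x k) l) \<and> fst \<circ> Y N \<noteq> fst \<circ> x"
    by (rule choice)
  then obtain Y where "\<forall>N. Y N \<in> X_L Alph V E src trg lab iota \<and> (\<forall>k\<le>N. fst (Y N k) = fst (x k)) \<and>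
      (\<forall>k\<le>N. \<forall>l\<le>Suc N. snd (Y N k) l = snd (x k) l) \<and> fst \<circ> Y N \<noteq> fst \<circ> x" ..
  then have Y: "\<And>N. Y N \<in> X_L Alph V E src trg lab iota"
    "\<And>N k. k \<le> N \<Longrightarrow> fst (Y N k) = fst (x k)"
    "\<And>N k l. k \<le> N \<Longrightarrow> l \<le> Suc N \<Longrightarrow> snd (Y N k) l = snd (x k) l"
    "\<And>N. fst \<circ> Y N \<noteq> fst \<circ> x"
    by simp_all
  have "limitin (X_top Alph V E src trg lab iota) Y x sequentially"
  proof (rule limitin_X_top[OF x Y(1)])
    show "\<forall>\<^sub>F N in sequentially. fst (Y N k) = fst (x k)" for k
      unfolding eventually_sequentially by (intro exI[of _ k] allI impI Y(2))
    show "\<forall>\<^sub>F N in sequentially. snd (Y N k) l = snd (x k) l" for k l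
      unfolding eventually_sequentially by (intro exI[of _ "k + l"] allI impI Y(3)) simp_all
  qed
  with Y(2,4) that show ?thesis by blast
qed

lemma interior_X_mn_empty:
  assumes CI: "condition_I V E src trg lab" and "m < n"
  shows "X_top Alph V E src trg lab iota interior_of X_mn Alph V E src trg lab iota m n = {}"
proof (rule ccontr)
  let ?X = "X_top Alph V E src trg lab iota" and ?Xmn = "X_mn Alph V E src trg lab iota m n"
  assume "?X interior_of ?Xmn \<noteq> {}"
  then obtain x where x_int: "x \<in> ?X interior_of ?Xmn" by blast
  have x_mn: "x \<in> ?Xmn" using interior_of_subset x_int by (rule subsetD)
  then have "x \<in> X_L Alph V E src trg lab iota" unfolding X_mn_def by blast
  from X_L_approx_other_labels[OF CI this] obtain Y where lim: "limitin ?X Y x sequentially"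
    and Y_fst: "\<And>N k. k \<le> N \<Longrightarrow> fst (Y N k) = fst (x k)"
    and Y_labels: "\<And>N. fst \<circ> Y N \<noteq> fst \<circ> x" by blast
  have "\<forall>\<^sub>F N in sequentially. Y N \<in> ?X interior_of ?Xmn"
    using lim x_int openin_interior_of unfolding limitin_def by blast
  then obtain N0 where N0: "\<And>N. N0 \<le> N \<Longrightarrow> Y N \<in> ?X interior_of ?Xmn"
    unfolding eventually_sequentially by blast
  define N where "N = N0 + n"
  have "Y N \<in> ?Xmn" using interior_of_subset N0[of N] by (rule subsetD) (simp add: N_def)
  have "fst \<circ> Y N = fst \<circ> x"
  proof (rule eventually_periodic_eqI[OF \<open>m < n\<close>])
    show "(fst \<circ> Y N) (i + m) = (fst \<circ> Y N) (i + n)" for i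
      using X_mn_shift[OF \<open>Y N \<in> ?Xmn\<close>] by simp
    show "(fst \<circ> x) (i + m) = (fst \<circ> x) (i + n)" for i
      using X_mn_shift[OF x_mn] by simp
    show "(fst \<circ> Y N) i = (fst \<circ> x) i" if "i < n" for i
      using Y_fst that by (simp add: N_def)
  qed
  with Y_labels show False by contradiction
qed

end

theorem mainTheorem1:
  fixes Alph :: "'s set" and V :: "nat \<Rightarrow> 'v set" and E :: "nat \<Rightarrow> 'e set"
    and src trg :: "'e \<Rightarrow> 'v" and lab :: "'e \<Rightarrow> 's" and iota :: "'v \<Rightarrow> 'v"
  assumes "lambda_graph_system Alph V E src trg lab iota"
    and "left_resolving E trg lab"
    and "condition_I V E src trg lab"
  shows "essentially_free Alph V E src trg lab iota"
proof -
  interpret left_resolving_lambda_graph_system Alph V E src trg lab iota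
    using assms(1,2) by unfold_locales
  show ?thesis
    unfolding essentially_free_def
  proof (intro allI impI)
    fix m n :: nat
    assume "m \<noteq> n"
    then consider "m < n" | "n < m" by linarith
    then show "X_top Alph V E src trg lab iota interior_of X_mn Alph V E src trg lab iota m n = {}"
    proof cases
      case 1
      then show ?thesis by (rule interior_X_mn_empty[OF assms(3)])
    next
      case 2
      then show ?thesis by (subst X_mn_commute) (rule interior_X_mn_empty[OF assms(3)])
    qed
  qed
qed

end
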